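(* Let $X,Y$ be finite presheaves of sets on $\mathscr{V}_f$. Then (1) $X\amalg Y$ is finite; (2) $X\times Y$ is finite; (3) every subpresheaf $U\subset X$ is finite; (4) if $X,Y$ are connected with respective basepoints $x,y$, then the wedge $X\vee Y$ is finite.
   Context: $p$ prime, $\mathbb{F}=\mathbb{F}_p$, $\mathscr{V}_f$ finite-dimensional $\mathbb{F}$-vector spaces; presheaves are contravariant functors $\mathscr{V}_f\to$ Sets, coproduct and product taken sectionwise. $\mathscr{F}$ denotes functors $\mathscr{V}_f^{\mathrm{op}}\to$ ($\mathbb{F}$-vector spaces); such a functor is finite if it has a finite composition series. A presheaf $X$ is finite if there is a monomorphism $X\hookrightarrow F_X$ of presheaves of sets with $F_X\in\mathscr{F}$ finite. $X$ is connected if $|X(0)|=1$; its basepoint is the unique element $x$ of $X(0)$ together with its images in each $X(V)$ (under the map induced by $V\to 0$). The wedge $X\vee Y$ is the coproduct of connected presheaves, i.e. $X$ and $Y$ glued along their basepoints (equivalently the subpresheaf $X\times\{y\}\cup\{x\}\times Y$ of $X\times Y$). *)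

theory Defs
  imports "HOL-Number_Theory.Residues" "HOL-Algebra.Module"
begin

section \<open>The category V_f (skeleton): objects n = F_p^n, morphisms = matrices\<close>

text \<open>A morphism F_p^m -> F_p^n is an n x m matrix A with entries in {0..<p};
  A i j is the entry in row i < n, column j < m; entries outside are 0
  (canonical representation).\<close>

type_synonym mat = "nat \<Rightarrow> nat \<Rightarrow> nat"

definition mor :: "nat \<Rightarrow> nat \<Rightarrow> nat \<Rightarrow> mat set" where
  "mor p m n = {A. (\<forall>i j. A i j < p) \<and> (\<forall>i j. (n \<le> i \<or> m \<le> j) \<longrightarrow> A i j = 0)}"

definition idm :: "nat \<Rightarrow> mat" where
  "idm n = (\<lambda>i j. if i = j \<and> i < n then 1 else 0)"

text \<open>Composition: for A : m -> n and B : n -> k, comp p n B A = B o A : m -> k.\<close>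
definition comp :: "nat \<Rightarrow> nat \<Rightarrow> mat \<Rightarrow> mat \<Rightarrow> mat" where
  "comp p n B A = (\<lambda>i j. (\<Sum>l<n. B i l * A l j) mod p)"

definition is_presheaf :: "nat \<Rightarrow> (nat \<Rightarrow> 'a set) \<Rightarrow> (nat \<Rightarrow> nat \<Rightarrow> mat \<Rightarrow> 'a \<Rightarrow> 'a) \<Rightarrow> bool" where
  "is_presheaf p X act \<longleftrightarrow>
     (\<forall>m n A x. A \<in> mor p m n \<longrightarrow> x \<in> X n \<longrightarrow> act m n A x \<in> X m) \<and>
     (\<forall>n x. x \<in> X n \<longrightarrow> act n n (idm n) x = x) \<and>
     (\<forall>m n k A B x. A \<in> mor p m n \<longrightarrow> B \<in> mor p n k \<longrightarrow> x \<in> X k \<longrightarrow>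
        act m n A (act n k B x) = act m k (comp p n B A) x)"

definition is_nat_trans ::
  "nat \<Rightarrow> (nat \<Rightarrow> 'a set) \<Rightarrow> (nat \<Rightarrow> nat \<Rightarrow> mat \<Rightarrow> 'a \<Rightarrow> 'a) \<Rightarrow>
   (nat \<Rightarrow> 'b set) \<Rightarrow> (nat \<Rightarrow> nat \<Rightarrow> mat \<Rightarrow> 'b \<Rightarrow> 'b) \<Rightarrow> (nat \<Rightarrow> 'a \<Rightarrow> 'b) \<Rightarrow> bool" where
  "is_nat_trans p X actX Y actY \<eta> \<longleftrightarrow>
     (\<forall>n x. x \<in> X n \<longrightarrow> \<eta> n x \<in> Y n) \<and>
     (\<forall>m n A x. A \<in> mor p m n \<longrightarrow> x \<in> X n \<longrightarrow> \<eta> m (actX m n A x) = actY m n A (\<eta> n x))"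

definition is_mono ::
  "nat \<Rightarrow> (nat \<Rightarrow> 'a set) \<Rightarrow> (nat \<Rightarrow> nat \<Rightarrow> mat \<Rightarrow> 'a \<Rightarrow> 'a) \<Rightarrow>
   (nat \<Rightarrow> 'b set) \<Rightarrow> (nat \<Rightarrow> nat \<Rightarrow> mat \<Rightarrow> 'b \<Rightarrow> 'b) \<Rightarrow> (nat \<Rightarrow> 'a \<Rightarrow> 'b) \<Rightarrow> bool" where
  "is_mono p X actX Y actY \<eta> \<longleftrightarrow>
     is_nat_trans p X actX Y actY \<eta> \<and> (\<forall>n. inj_on (\<eta> n) (X n))"

abbreviation Fp :: "nat \<Rightarrow> int ring" where
  "Fp p \<equiv> residue_ring (int p)"

definition is_linear :: "nat \<Rightarrow> (int, 'b) module \<Rightarrow> (int, 'b) module \<Rightarrow> ('b \<Rightarrow> 'b) \<Rightarrow> bool" where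
  "is_linear p V W f \<longleftrightarrow>
     (\<forall>x \<in> carrier V. f x \<in> carrier W) \<and>
     (\<forall>x \<in> carrier V. \<forall>y \<in> carrier V. f (x \<oplus>\<^bsub>V\<^esub> y) = f x \<oplus>\<^bsub>W\<^esub> f y) \<and>
     (\<forall>a \<in> carrier (Fp p). \<forall>x \<in> carrier V. f (a \<odot>\<^bsub>V\<^esub> x) = a \<odot>\<^bsub>W\<^esub> f x)"

definition is_vfunctor :: "nat \<Rightarrow> (nat \<Rightarrow> (int, 'b) module) \<Rightarrow> (nat \<Rightarrow> nat \<Rightarrow> mat \<Rightarrow> 'b \<Rightarrow> 'b) \<Rightarrow> bool" where
  "is_vfunctor p F act \<longleftrightarrow>
     (\<forall>n. module (Fp p) (F n)) \<and>
     (\<forall>m n A. A \<in> mor p m n \<longrightarrow> is_linear p (F n) (F m) (act m n A)) \<and>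
     is_presheaf p (\<lambda>n. carrier (F n)) act"

definition is_subfunctor :: "nat \<Rightarrow> (nat \<Rightarrow> (int, 'b) module) \<Rightarrow> (nat \<Rightarrow> nat \<Rightarrow> mat \<Rightarrow> 'b \<Rightarrow> 'b) \<Rightarrow> (nat \<Rightarrow> 'b set) \<Rightarrow> bool" where
  "is_subfunctor p F act S \<longleftrightarrow>
     (\<forall>n. S n \<subseteq> carrier (F n) \<and> submodule (S n) (Fp p) (F n)) \<and>
     (\<forall>m n A x. A \<in> mor p m n \<longrightarrow> x \<in> S n \<longrightarrow> act m n A x \<in> S m)"

text \<open>By the correspondence theorem,
  S (i+1)/S i is simple iff S i is properly contained in S (i+1) and there is no
  subfunctor strictly between them.\<close>

definition is_composition_series ::
  "nat \<Rightarrow> (nat \<Rightarrow> (int, 'b) module) \<Rightarrow> (nat \<Rightarrow> nat \<Rightarrow> mat \<Rightarrow> 'b \<Rightarrow> 'b) \<Rightarrow> nat \<Rightarrow> (nat \<Rightarrow> nat \<Rightarrow> 'b set) \<Rightarrow> bool" where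
  "is_composition_series p F act k S \<longleftrightarrow>
     (\<forall>i \<le> k. is_subfunctor p F act (S i)) \<and>
     (\<forall>n. S 0 n = {\<zero>\<^bsub>F n\<^esub>}) \<and>
     (\<forall>n. S k n = carrier (F n)) \<and>
     (\<forall>i < k. (\<forall>n. S i n \<subseteq> S (Suc i) n) \<and> S i \<noteq> S (Suc i) \<and>
        \<not> (\<exists>T. is_subfunctor p F act T \<and> (\<forall>n. S i n \<subseteq> T n \<and> T n \<subseteq> S (Suc i) n) \<and>
               T \<noteq> S i \<and> T \<noteq> S (Suc i)))"

definition finite_vfunctor :: "nat \<Rightarrow> (nat \<Rightarrow> (int, 'b) module) \<Rightarrow> (nat \<Rightarrow> nat \<Rightarrow> mat \<Rightarrow> 'b \<Rightarrow> 'b) \<Rightarrow> bool" where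
  "finite_vfunctor p F act \<longleftrightarrow>
     is_vfunctor p F act \<and> (\<exists>k S. is_composition_series p F act k S)"

text \<open>The vector-space-valued functor is taken with elements of type nat; every
  finite functor has finite (hence countable) values, so this loses nothing.\<close>

definition finite_presheaf :: "nat \<Rightarrow> (nat \<Rightarrow> 'a set) \<Rightarrow> (nat \<Rightarrow> nat \<Rightarrow> mat \<Rightarrow> 'a \<Rightarrow> 'a) \<Rightarrow> bool" where
  "finite_presheaf p X act \<longleftrightarrow> is_presheaf p X act \<and>
     (\<exists>(F :: nat \<Rightarrow> (int, nat) module) actF \<eta>.
        finite_vfunctor p F actF \<and> is_mono p X act (\<lambda>n. carrier (F n)) actF \<eta>)"

definition copr_obj :: "(nat \<Rightarrow> 'a set) \<Rightarrow> (nat \<Rightarrow> 'b set) \<Rightarrow> nat \<Rightarrow> ('a + 'b) set" where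
  "copr_obj X Y n = X n <+> Y n"

definition copr_act :: "(nat \<Rightarrow> nat \<Rightarrow> mat \<Rightarrow> 'a \<Rightarrow> 'a) \<Rightarrow> (nat \<Rightarrow> nat \<Rightarrow> mat \<Rightarrow> 'b \<Rightarrow> 'b) \<Rightarrow>
    nat \<Rightarrow> nat \<Rightarrow> mat \<Rightarrow> 'a + 'b \<Rightarrow> 'a + 'b" where
  "copr_act aX aY m n A = map_sum (aX m n A) (aY m n A)"

definition prod_obj :: "(nat \<Rightarrow> 'a set) \<Rightarrow> (nat \<Rightarrow> 'b set) \<Rightarrow> nat \<Rightarrow> ('a \<times> 'b) set" where
  "prod_obj X Y n = X n \<times> Y n"

definition prod_act :: "(nat \<Rightarrow> nat \<Rightarrow> mat \<Rightarrow> 'a \<Rightarrow> 'a) \<Rightarrow> (nat \<Rightarrow> nat \<Rightarrow> mat \<Rightarrow> 'b \<Rightarrow> 'b) \<Rightarrow>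
    nat \<Rightarrow> nat \<Rightarrow> mat \<Rightarrow> 'a \<times> 'b \<Rightarrow> 'a \<times> 'b" where
  "prod_act aX aY m n A = map_prod (aX m n A) (aY m n A)"

definition is_subpresheaf :: "nat \<Rightarrow> (nat \<Rightarrow> 'a set) \<Rightarrow> (nat \<Rightarrow> 'a set) \<Rightarrow> (nat \<Rightarrow> nat \<Rightarrow> mat \<Rightarrow> 'a \<Rightarrow> 'a) \<Rightarrow> bool" where
  "is_subpresheaf p U X act \<longleftrightarrow>
     (\<forall>n. U n \<subseteq> X n) \<and> (\<forall>m n A x. A \<in> mor p m n \<longrightarrow> x \<in> U n \<longrightarrow> act m n A x \<in> U m)"

definition connected :: "(nat \<Rightarrow> 'a set) \<Rightarrow> bool" where
  "connected X \<longleftrightarrow> card (X 0) = 1"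

text \<open>Basepoint at F_p^n: image of the unique element of X 0 under the map
  induced by the (zero) morphism F_p^n -> 0.\<close>
definition basepoint :: "(nat \<Rightarrow> 'a set) \<Rightarrow> (nat \<Rightarrow> nat \<Rightarrow> mat \<Rightarrow> 'a \<Rightarrow> 'a) \<Rightarrow> nat \<Rightarrow> 'a" where
  "basepoint X act n = act n 0 (\<lambda>i j. 0) (the_elem (X 0))"

definition wedge_obj :: "(nat \<Rightarrow> 'a set) \<Rightarrow> (nat \<Rightarrow> nat \<Rightarrow> mat \<Rightarrow> 'a \<Rightarrow> 'a) \<Rightarrow>
    (nat \<Rightarrow> 'b set) \<Rightarrow> (nat \<Rightarrow> nat \<Rightarrow> mat \<Rightarrow> 'b \<Rightarrow> 'b) \<Rightarrow> nat \<Rightarrow> ('a \<times> 'b) set" where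
  "wedge_obj X aX Y aY n = X n \<times> {basepoint Y aY n} \<union> {basepoint X aX n} \<times> Y n"

end

theory Submission
  imports Defs "HOL-Library.Nat_Bijection"
begin

text \<open>Each construction is embedded into a finite functor built by direct sums:
  \<open>X \<times> Y \<hookrightarrow> F \<oplus> G\<close>, \<open>X \<amalg> Y \<hookrightarrow> F \<oplus> G \<oplus> \<bbbF>\<close> (the constant summand \<open>\<bbbF>\<close>
  records which side a section comes from: \<open>x \<mapsto> (\<eta> x, 0, 0)\<close>, \<open>y \<mapsto> (0, \<theta> y, 1)\<close>),
  a subpresheaf by restricting the embedding, and the wedge as a subpresheaf of the
  product. A direct sum of finite functors is finite because a composition series of
  \<open>F \<oplus> G\<close> is obtained by running through one of \<open>F \<oplus> 0\<close> and then one of \<open>G\<close> on top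
  of it; the constant functor \<open>\<bbbF>\<close> is simple since the zero morphisms move a nonzero
  section to every degree.\<close>

text \<open>\<^const>\<open>finite_presheaf\<close> requires the ambient functor to take values in modules with
  carrier type \<^typ>\<open>nat\<close>, so pairs are encoded by the Cantor pairing function.\<close>

definition npair :: "nat \<Rightarrow> nat \<Rightarrow> nat" where "npair a b = prod_encode (a, b)"
definition nfst :: "nat \<Rightarrow> nat" where "nfst x = fst (prod_decode x)"
definition nsnd :: "nat \<Rightarrow> nat" where "nsnd x = snd (prod_decode x)"

lemma nfst_npair [simp]: "nfst (npair a b) = a" by (simp add: nfst_def npair_def)
lemma nsnd_npair [simp]: "nsnd (npair a b) = b" by (simp add: nsnd_def npair_def)
lemma npair_eq_iff [simp]: "npair a b = npair c d \<longleftrightarrow> a = c \<and> b = d" by (metis nfst_npair nsnd_npair)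
lemma npair_nfst_nsnd [simp]: "npair (nfst x) (nsnd x) = x" by (simp add: nfst_def nsnd_def npair_def)

definition dsum :: "(int, nat) module \<Rightarrow> (int, nat) module \<Rightarrow> (int, nat) module" where
  "dsum M N = \<lparr>carrier = {x. nfst x \<in> carrier M \<and> nsnd x \<in> carrier N},
     monoid.mult = (\<lambda>x y. x), one = 0, zero = npair \<zero>\<^bsub>M\<^esub> \<zero>\<^bsub>N\<^esub>,
     add = (\<lambda>x y. npair (nfst x \<oplus>\<^bsub>M\<^esub> nfst y) (nsnd x \<oplus>\<^bsub>N\<^esub> nsnd y)),
     smult = (\<lambda>a x. npair (a \<odot>\<^bsub>M\<^esub> nfst x) (a \<odot>\<^bsub>N\<^esub> nsnd x))\<rparr>"

lemma dsum_simps [simp]: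
  "carrier (dsum M N) = {x. nfst x \<in> carrier M \<and> nsnd x \<in> carrier N}"
  "\<zero>\<^bsub>dsum M N\<^esub> = npair \<zero>\<^bsub>M\<^esub> \<zero>\<^bsub>N\<^esub>"
  "x \<oplus>\<^bsub>dsum M N\<^esub> y = npair (nfst x \<oplus>\<^bsub>M\<^esub> nfst y) (nsnd x \<oplus>\<^bsub>N\<^esub> nsnd y)"
  "a \<odot>\<^bsub>dsum M N\<^esub> x = npair (a \<odot>\<^bsub>M\<^esub> nfst x) (a \<odot>\<^bsub>N\<^esub> nsnd x)"
  by (simp_all add: dsum_def)

lemma dsum_module:
  assumes M: "module R M" and N: "module R N"
  shows "module R (dsum M N)"
proof -
  interpret M: module R M by (rule M)
  interpret N: module R N by (rule N)
  show ?thesis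
  proof (rule moduleI)
    show "abelian_group (dsum M N)"
    proof (rule abelian_groupI)
      fix x assume "x \<in> carrier (dsum M N)"
      then show "\<exists>y \<in> carrier (dsum M N). y \<oplus>\<^bsub>dsum M N\<^esub> x = \<zero>\<^bsub>dsum M N\<^esub>"
        by (intro bexI[of _ "npair (\<ominus>\<^bsub>M\<^esub> nfst x) (\<ominus>\<^bsub>N\<^esub> nsnd x)"]) (auto simp: M.l_neg N.l_neg)
    qed (auto simp: M.a_ac N.a_ac)
  qed (auto simp: M.is_cring M.smult_l_distr N.smult_l_distr M.smult_r_distr N.smult_r_distr
         M.smult_assoc1 N.smult_assoc1)
qed

lemma dsum_a_inv:
  assumes M: "module R M" and N: "module R N" and x: "x \<in> carrier (dsum M N)"
  shows "\<ominus>\<^bsub>dsum M N\<^esub> x = npair (\<ominus>\<^bsub>M\<^esub> nfst x) (\<ominus>\<^bsub>N\<^esub> nsnd x)"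
proof -
  interpret M: module R M by (rule M)
  interpret N: module R N by (rule N)
  interpret D: module R "dsum M N" by (rule dsum_module[OF M N])
  show ?thesis
    by (rule D.minus_equality) (use x in \<open>auto simp: M.l_neg N.l_neg\<close>)
qed

definition nprod_set :: "nat set \<Rightarrow> nat set \<Rightarrow> nat set" where
  "nprod_set A B = {x. nfst x \<in> A \<and> nsnd x \<in> B}"

lemma npair_in_nprod_set [simp]: "npair a b \<in> nprod_set A B \<longleftrightarrow> a \<in> A \<and> b \<in> B"
  by (simp add: nprod_set_def)

lemma is_linear_zero:
  assumes V: "module (Fp p) V" and W: "module (Fp p) W" and f: "is_linear p V W f"
  shows "f \<zero>\<^bsub>V\<^esub> = \<zero>\<^bsub>W\<^esub>"
proof -
  interpret V: module "Fp p" V by (rule V)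
  interpret W: module "Fp p" W by (rule W)
  have f0: "f \<zero>\<^bsub>V\<^esub> \<in> carrier W" using f unfolding is_linear_def by auto
  have "f \<zero>\<^bsub>V\<^esub> = f (\<zero>\<^bsub>V\<^esub> \<oplus>\<^bsub>V\<^esub> \<zero>\<^bsub>V\<^esub>)" by simp
  also have "\<dots> = f \<zero>\<^bsub>V\<^esub> \<oplus>\<^bsub>W\<^esub> f \<zero>\<^bsub>V\<^esub>"
    using f V.zero_closed unfolding is_linear_def by blast
  finally show ?thesis using W.add.l_cancel_one'[OF f0 f0] by simp
qed

context
  fixes p F aF assumes F: "is_vfunctor p F aF"
begin

interpretation M: module "Fp p" "F n" for n using F by (simp add: is_vfunctor_def)

lemma vfunctor_module: "module (Fp p) (F n)" ..

lemma vfunctor_act_closed: "A \<in> mor p m n \<Longrightarrow> x \<in> carrier (F n) \<Longrightarrow> aF m n A x \<in> carrier (F m)"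
  using F by (simp add: is_vfunctor_def is_presheaf_def)

lemma vfunctor_act_zero: "A \<in> mor p m n \<Longrightarrow> aF m n A \<zero>\<^bsub>F n\<^esub> = \<zero>\<^bsub>F m\<^esub>"
  using F by (intro is_linear_zero[of p]) (simp_all add: is_vfunctor_def)

lemma vfunctor_zero_closed [simp]: "\<zero>\<^bsub>F n\<^esub> \<in> carrier (F n)"
  by simp

lemma vfunctor_a_inv_zero [simp]: "\<ominus>\<^bsub>F n\<^esub> \<zero>\<^bsub>F n\<^esub> = \<zero>\<^bsub>F n\<^esub>"
  by (rule M.minus_equality) simp_all

lemma subfunctorI:
  assumes "\<And>n. \<zero>\<^bsub>F n\<^esub> \<in> S n"
    and "\<And>n a. a \<in> S n \<Longrightarrow> a \<in> carrier (F n)"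
    and "\<And>n a. a \<in> S n \<Longrightarrow> \<ominus>\<^bsub>F n\<^esub> a \<in> S n"
    and "\<And>n a b. a \<in> S n \<Longrightarrow> b \<in> S n \<Longrightarrow> a \<oplus>\<^bsub>F n\<^esub> b \<in> S n"
    and "\<And>n c a. c \<in> carrier (Fp p) \<Longrightarrow> a \<in> S n \<Longrightarrow> c \<odot>\<^bsub>F n\<^esub> a \<in> S n"
    and "\<And>m n A a. A \<in> mor p m n \<Longrightarrow> a \<in> S n \<Longrightarrow> aF m n A a \<in> S m"
  shows "is_subfunctor p F aF S"
  unfolding is_subfunctor_def
proof (intro conjI allI impI)
  fix n
  show "S n \<subseteq> carrier (F n)" using assms(2) by blast
  show "submodule (S n) (Fp p) (F n)"
    by (rule M.submoduleI[OF _ assms(1) assms(3) assms(4) assms(5)]) (use assms(2) in blast)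
qed (rule assms(6))

context
  fixes S assumes S: "is_subfunctor p F aF S"
begin

lemma subfunctor_submodule: "submodule (S n) (Fp p) (F n)"
  using S by (simp add: is_subfunctor_def)

lemma subfunctor_subset: "a \<in> S n \<Longrightarrow> a \<in> carrier (F n)"
  using M.submoduleE(1)[OF subfunctor_submodule] by blast

lemma subfunctor_zero: "\<zero>\<^bsub>F n\<^esub> \<in> S n"
  using subgroup.one_closed[OF submodule.axioms(1)[OF subfunctor_submodule]] by simp

lemma subfunctor_a_inv: "a \<in> S n \<Longrightarrow> \<ominus>\<^bsub>F n\<^esub> a \<in> S n"
  by (rule M.submoduleE(3)[OF subfunctor_submodule])

lemma subfunctor_add: "a \<in> S n \<Longrightarrow> b \<in> S n \<Longrightarrow> a \<oplus>\<^bsub>F n\<^esub> b \<in> S n"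
  by (rule M.submoduleE(5)[OF subfunctor_submodule])

lemma subfunctor_smult: "c \<in> carrier (Fp p) \<Longrightarrow> a \<in> S n \<Longrightarrow> c \<odot>\<^bsub>F n\<^esub> a \<in> S n"
  by (rule M.submoduleE(4)[OF subfunctor_submodule])

lemma subfunctor_act: "A \<in> mor p m n \<Longrightarrow> a \<in> S n \<Longrightarrow> aF m n A a \<in> S m"
  using S by (simp add: is_subfunctor_def)

end

lemma zero_subfunctor: "is_subfunctor p F aF (\<lambda>n. {\<zero>\<^bsub>F n\<^esub>})"
  by (rule subfunctorI) (auto simp: vfunctor_act_zero)

lemma carrier_subfunctor: "is_subfunctor p F aF (\<lambda>n. carrier (F n))"
  by (rule subfunctorI) (auto simp: vfunctor_act_closed)

end

definition dsum_act :: "(nat \<Rightarrow> nat \<Rightarrow> mat \<Rightarrow> nat \<Rightarrow> nat) \<Rightarrow> (nat \<Rightarrow> nat \<Rightarrow> mat \<Rightarrow> nat \<Rightarrow> nat) \<Rightarrow>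
    nat \<Rightarrow> nat \<Rightarrow> mat \<Rightarrow> nat \<Rightarrow> nat" where
  "dsum_act aF aG m n A x = npair (aF m n A (nfst x)) (aG m n A (nsnd x))"

lemma dsum_vfunctor:
  assumes F: "is_vfunctor p F aF" and G: "is_vfunctor p G aG"
  shows "is_vfunctor p (\<lambda>n. dsum (F n) (G n)) (dsum_act aF aG)"
  unfolding is_vfunctor_def
proof (intro conjI allI impI)
  fix n show "module (Fp p) (dsum (F n) (G n))"
    using F G by (intro dsum_module vfunctor_module)
next
  fix m n A assume "A \<in> mor p m n"
  then show "is_linear p (dsum (F n) (G n)) (dsum (F m) (G m)) (dsum_act aF aG m n A)"
    using F G unfolding is_vfunctor_def is_linear_def by (auto simp: dsum_act_def)
next
  show "is_presheaf p (\<lambda>n. carrier (dsum (F n) (G n))) (dsum_act aF aG)"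
    using F G unfolding is_vfunctor_def is_presheaf_def by (auto simp: dsum_act_def)
qed

lemma dsum_subfunctor:
  assumes F: "is_vfunctor p F aF" and G: "is_vfunctor p G aG"
    and S: "is_subfunctor p F aF S" and T: "is_subfunctor p G aG T"
  shows "is_subfunctor p (\<lambda>n. dsum (F n) (G n)) (dsum_act aF aG) (\<lambda>n. nprod_set (S n) (T n))"
proof (rule subfunctorI[OF dsum_vfunctor[OF F G]])
  fix n x assume x: "x \<in> nprod_set (S n) (T n)"
  then show "x \<in> carrier (dsum (F n) (G n))"
    by (auto simp: nprod_set_def intro: subfunctor_subset[OF F S] subfunctor_subset[OF G T])
  then show "\<ominus>\<^bsub>dsum (F n) (G n)\<^esub> x \<in> nprod_set (S n) (T n)"
    using x by (simp add: dsum_a_inv[OF vfunctor_module[OF F] vfunctor_module[OF G]] nprod_set_def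
        subfunctor_a_inv[OF F S] subfunctor_a_inv[OF G T])
next
  fix n show "\<zero>\<^bsub>dsum (F n) (G n)\<^esub> \<in> nprod_set (S n) (T n)"
    by (simp add: subfunctor_zero[OF F S] subfunctor_zero[OF G T])
next
  fix n x y assume "x \<in> nprod_set (S n) (T n)" "y \<in> nprod_set (S n) (T n)"
  then show "x \<oplus>\<^bsub>dsum (F n) (G n)\<^esub> y \<in> nprod_set (S n) (T n)"
    by (simp add: nprod_set_def subfunctor_add[OF F S] subfunctor_add[OF G T])
next
  fix n c x assume "c \<in> carrier (Fp p)" "x \<in> nprod_set (S n) (T n)"
  then show "c \<odot>\<^bsub>dsum (F n) (G n)\<^esub> x \<in> nprod_set (S n) (T n)"
    by (simp add: nprod_set_def subfunctor_smult[OF F S] subfunctor_smult[OF G T])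
next
  fix m n A x assume "A \<in> mor p m n" "x \<in> nprod_set (S n) (T n)"
  then show "dsum_act aF aG m n A x \<in> nprod_set (S m) (T m)"
    by (simp add: nprod_set_def dsum_act_def subfunctor_act[OF F S] subfunctor_act[OF G T])
qed

subsection \<open>Composition series of a direct sum\<close>

definition covers ::
  "nat \<Rightarrow> (nat \<Rightarrow> (int, 'b) module) \<Rightarrow> (nat \<Rightarrow> nat \<Rightarrow> mat \<Rightarrow> 'b \<Rightarrow> 'b) \<Rightarrow> (nat \<Rightarrow> 'b set) \<Rightarrow> (nat \<Rightarrow> 'b set) \<Rightarrow> bool" where
  "covers p F aF S T \<longleftrightarrow> (\<forall>n. S n \<subseteq> T n) \<and> S \<noteq> T \<and>
     \<not> (\<exists>U. is_subfunctor p F aF U \<and> (\<forall>n. S n \<subseteq> U n \<and> U n \<subseteq> T n) \<and> U \<noteq> S \<and> U \<noteq> T)"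

lemma is_composition_series_iff_covers:
  "is_composition_series p F aF k S \<longleftrightarrow>
     (\<forall>i \<le> k. is_subfunctor p F aF (S i)) \<and> (\<forall>n. S 0 n = {\<zero>\<^bsub>F n\<^esub>}) \<and>
     (\<forall>n. S k n = carrier (F n)) \<and> (\<forall>i < k. covers p F aF (S i) (S (Suc i)))"
  by (simp add: is_composition_series_def covers_def)

lemma covers_image:
  assumes cov: "covers p F aF S T" and inj: "inj \<Phi>"
    and mono: "\<And>V W n. (\<And>n. V n \<subseteq> W n) \<Longrightarrow> \<Phi> V n \<subseteq> \<Phi> W n"
    and lift: "\<And>U. is_subfunctor p G aG U \<Longrightarrow> (\<forall>n. \<Phi> S n \<subseteq> U n \<and> U n \<subseteq> \<Phi> T n) \<Longrightarrow>
       \<exists>V. is_subfunctor p F aF V \<and> (\<forall>n. S n \<subseteq> V n \<and> V n \<subseteq> T n) \<and> U = \<Phi> V"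
  shows "covers p G aG (\<Phi> S) (\<Phi> T)"
  unfolding covers_def
proof (intro conjI notI allI)
  show "\<Phi> S n \<subseteq> \<Phi> T n" for n using cov mono by (simp add: covers_def)
  show "\<Phi> S = \<Phi> T \<Longrightarrow> False" using cov inj by (auto simp: covers_def dest: injD)
next
  assume "\<exists>U. is_subfunctor p G aG U \<and> (\<forall>n. \<Phi> S n \<subseteq> U n \<and> U n \<subseteq> \<Phi> T n) \<and> U \<noteq> \<Phi> S \<and> U \<noteq> \<Phi> T"
  then obtain V where "is_subfunctor p F aF V" "\<forall>n. S n \<subseteq> V n \<and> V n \<subseteq> T n" "\<Phi> V \<noteq> \<Phi> S" "\<Phi> V \<noteq> \<Phi> T"
    using lift by metis
  then show False using cov unfolding covers_def by blast
qed

definition left_slice :: "(nat \<Rightarrow> (int, nat) module) \<Rightarrow> (nat \<Rightarrow> nat set) \<Rightarrow> nat \<Rightarrow> nat set" where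
  "left_slice G U n = {a. npair a \<zero>\<^bsub>G n\<^esub> \<in> U n}"

definition right_slice :: "(nat \<Rightarrow> (int, nat) module) \<Rightarrow> (nat \<Rightarrow> nat set) \<Rightarrow> nat \<Rightarrow> nat set" where
  "right_slice F U n = {b. npair \<zero>\<^bsub>F n\<^esub> b \<in> U n}"

context
  fixes p F aF G aG U
  assumes F: "is_vfunctor p F aF" and G: "is_vfunctor p G aG"
    and U: "is_subfunctor p (\<lambda>n. dsum (F n) (G n)) (dsum_act aF aG) U"
begin

interpretation F: module "Fp p" "F n" for n by (rule vfunctor_module[OF F])
interpretation G: module "Fp p" "G n" for n by (rule vfunctor_module[OF G])

private lemmas U_facts = subfunctor_zero[OF dsum_vfunctor[OF F G] U] subfunctor_subset[OF dsum_vfunctor[OF F G] U]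
  subfunctor_a_inv[OF dsum_vfunctor[OF F G] U] subfunctor_add[OF dsum_vfunctor[OF F G] U]
  subfunctor_smult[OF dsum_vfunctor[OF F G] U] subfunctor_act[OF dsum_vfunctor[OF F G] U]

lemma left_slice_subfunctor: "is_subfunctor p F aF (left_slice G U)"
proof (rule subfunctorI[OF F])
  fix n
  have carr: "a \<in> carrier (F n)" if "a \<in> left_slice G U n" for a
    using U_facts(2)[of "npair a \<zero>\<^bsub>G n\<^esub>"] that by (simp add: left_slice_def)
  show "a \<in> left_slice G U n \<Longrightarrow> a \<in> carrier (F n)" for a by (rule carr)
  show "\<zero>\<^bsub>F n\<^esub> \<in> left_slice G U n" using U_facts(1) by (simp add: left_slice_def)
  show "\<ominus>\<^bsub>F n\<^esub> a \<in> left_slice G U n" if "a \<in> left_slice G U n" for a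
    using U_facts(3)[of "npair a \<zero>\<^bsub>G n\<^esub>" n] that carr[OF that]
    by (simp add: left_slice_def dsum_a_inv[OF F.module_axioms G.module_axioms] vfunctor_a_inv_zero[OF G])
  show "a \<oplus>\<^bsub>F n\<^esub> b \<in> left_slice G U n" if "a \<in> left_slice G U n" "b \<in> left_slice G U n" for a b
    using U_facts(4)[of "npair a \<zero>\<^bsub>G n\<^esub>" n "npair b \<zero>\<^bsub>G n\<^esub>"] that by (simp add: left_slice_def)
  show "c \<odot>\<^bsub>F n\<^esub> a \<in> left_slice G U n" if "c \<in> carrier (Fp p)" "a \<in> left_slice G U n" for c a
    using U_facts(5)[of c "npair a \<zero>\<^bsub>G n\<^esub>" n] that by (simp add: left_slice_def)
next
  fix m n A a assume "A \<in> mor p m n" "a \<in> left_slice G U n"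
  then show "aF m n A a \<in> left_slice G U m"
    using U_facts(6)[of A m n "npair a \<zero>\<^bsub>G n\<^esub>"] by (simp add: left_slice_def dsum_act_def vfunctor_act_zero[OF G])
qed

lemma right_slice_subfunctor: "is_subfunctor p G aG (right_slice F U)"
proof (rule subfunctorI[OF G])
  fix n
  have carr: "b \<in> carrier (G n)" if "b \<in> right_slice F U n" for b
    using U_facts(2)[of "npair \<zero>\<^bsub>F n\<^esub> b"] that by (simp add: right_slice_def)
  show "b \<in> right_slice F U n \<Longrightarrow> b \<in> carrier (G n)" for b by (rule carr)
  show "\<zero>\<^bsub>G n\<^esub> \<in> right_slice F U n" using U_facts(1) by (simp add: right_slice_def)
  show "\<ominus>\<^bsub>G n\<^esub> b \<in> right_slice F U n" if "b \<in> right_slice F U n" for b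
    using U_facts(3)[of "npair \<zero>\<^bsub>F n\<^esub> b" n] that carr[OF that]
    by (simp add: right_slice_def dsum_a_inv[OF F.module_axioms G.module_axioms] vfunctor_a_inv_zero[OF F])
  show "a \<oplus>\<^bsub>G n\<^esub> b \<in> right_slice F U n" if "a \<in> right_slice F U n" "b \<in> right_slice F U n" for a b
    using U_facts(4)[of "npair \<zero>\<^bsub>F n\<^esub> a" n "npair \<zero>\<^bsub>F n\<^esub> b"] that by (simp add: right_slice_def)
  show "c \<odot>\<^bsub>G n\<^esub> b \<in> right_slice F U n" if "c \<in> carrier (Fp p)" "b \<in> right_slice F U n" for c b
    using U_facts(5)[of c "npair \<zero>\<^bsub>F n\<^esub> b" n] that by (simp add: right_slice_def)
next
  fix m n A b assume "A \<in> mor p m n" "b \<in> right_slice F U n"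
  then show "aG m n A b \<in> right_slice F U m"
    using U_facts(6)[of A m n "npair \<zero>\<^bsub>F n\<^esub> b"] by (simp add: right_slice_def dsum_act_def vfunctor_act_zero[OF F])
qed

lemma left_slice_lift:
  assumes lo: "\<And>n. nprod_set (S n) {\<zero>\<^bsub>G n\<^esub>} \<subseteq> U n"
    and hi: "\<And>n. U n \<subseteq> nprod_set (T n) {\<zero>\<^bsub>G n\<^esub>}"
  shows "(\<forall>n. S n \<subseteq> left_slice G U n \<and> left_slice G U n \<subseteq> T n) \<and>
    U = (\<lambda>n. nprod_set (left_slice G U n) {\<zero>\<^bsub>G n\<^esub>})"
proof (intro conjI allI ext)
  fix n
  show "S n \<subseteq> left_slice G U n" using lo[of n] by (auto simp: left_slice_def)
  show "left_slice G U n \<subseteq> T n" using hi[of n] by (auto simp: left_slice_def)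
  show "U n = nprod_set (left_slice G U n) {\<zero>\<^bsub>G n\<^esub>}"
  proof (intro equalityI subsetI)
    fix x assume x: "x \<in> U n"
    then have "nsnd x = \<zero>\<^bsub>G n\<^esub>" using hi[of n] by (auto simp: nprod_set_def)
    then show "x \<in> nprod_set (left_slice G U n) {\<zero>\<^bsub>G n\<^esub>}"
      using x by (simp add: nprod_set_def left_slice_def flip: \<open>nsnd x = _\<close>)
  next
    fix x assume "x \<in> nprod_set (left_slice G U n) {\<zero>\<^bsub>G n\<^esub>}"
    then have "npair (nfst x) (nsnd x) \<in> U n" by (simp add: nprod_set_def left_slice_def)
    then show "x \<in> U n" by simp
  qed
qed

lemma right_slice_lift:
  assumes lo: "\<And>n. nprod_set (carrier (F n)) (S n) \<subseteq> U n"
    and hi: "\<And>n. U n \<subseteq> nprod_set (carrier (F n)) (T n)"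
    and S0: "\<And>n. \<zero>\<^bsub>G n\<^esub> \<in> S n"
  shows "(\<forall>n. S n \<subseteq> right_slice F U n \<and> right_slice F U n \<subseteq> T n) \<and>
    U = (\<lambda>n. nprod_set (carrier (F n)) (right_slice F U n))"
proof (intro conjI allI ext)
  fix n
  show "S n \<subseteq> right_slice F U n" using lo[of n] by (auto simp: right_slice_def)
  show "right_slice F U n \<subseteq> T n" using hi[of n] by (auto simp: right_slice_def)
  have left: "npair a \<zero>\<^bsub>G n\<^esub> \<in> U n" if "a \<in> carrier (F n)" for a
    using lo[of n] S0[of n] that by auto
  show "U n = nprod_set (carrier (F n)) (right_slice F U n)"
  proof (intro equalityI subsetI)
    fix x assume x: "x \<in> U n"
    then have a: "nfst x \<in> carrier (F n)" and b: "nsnd x \<in> carrier (G n)" using U_facts(2) by auto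
    have "npair (\<ominus>\<^bsub>F n\<^esub> nfst x) \<zero>\<^bsub>G n\<^esub> \<oplus>\<^bsub>dsum (F n) (G n)\<^esub> x \<in> U n"
      using U_facts(4)[OF left[OF F.a_inv_closed[OF a]] x] .
    then have "npair \<zero>\<^bsub>F n\<^esub> (nsnd x) \<in> U n" using a b by (simp add: F.l_neg)
    then show "x \<in> nprod_set (carrier (F n)) (right_slice F U n)"
      using a by (simp add: nprod_set_def right_slice_def)
  next
    fix x assume "x \<in> nprod_set (carrier (F n)) (right_slice F U n)"
    then have a: "nfst x \<in> carrier (F n)" and b: "npair \<zero>\<^bsub>F n\<^esub> (nsnd x) \<in> U n"
      by (auto simp: nprod_set_def right_slice_def)
    have "nsnd x \<in> carrier (G n)" using U_facts(2)[OF b] by simp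
    then show "x \<in> U n" using U_facts(4)[OF left[OF a] b] a by simp
  qed
qed

end

lemma nprod_set_singleton: "nprod_set {a} {b} = {npair a b}"
  by (auto simp: nprod_set_def)

lemma covers_dsum_left:
  assumes F: "is_vfunctor p F aF" and G: "is_vfunctor p G aG" and cov: "covers p F aF V W"
  shows "covers p (\<lambda>n. dsum (F n) (G n)) (dsum_act aF aG)
    (\<lambda>n. nprod_set (V n) {\<zero>\<^bsub>G n\<^esub>}) (\<lambda>n. nprod_set (W n) {\<zero>\<^bsub>G n\<^esub>})"
proof -
  define L where "L S = (\<lambda>n. nprod_set (S n) {\<zero>\<^bsub>G n\<^esub>})" for S
  have "inj L"
  proof (rule injI)
    fix S S' assume "L S = L S'"
    then have "npair a \<zero>\<^bsub>G n\<^esub> \<in> L S n \<longleftrightarrow> npair a \<zero>\<^bsub>G n\<^esub> \<in> L S' n" for n a by simp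
    then show "S = S'" by (simp add: L_def fun_eq_iff set_eq_iff)
  qed
  then have "covers p (\<lambda>n. dsum (F n) (G n)) (dsum_act aF aG) (L V) (L W)"
  proof (rule covers_image[OF cov])
    show "L S n \<subseteq> L S' n" if "\<And>n. S n \<subseteq> S' n" for S S' n using that by (auto simp: L_def nprod_set_def)
    fix U assume "is_subfunctor p (\<lambda>n. dsum (F n) (G n)) (dsum_act aF aG) U" "\<forall>n. L V n \<subseteq> U n \<and> U n \<subseteq> L W n"
    then show "\<exists>S. is_subfunctor p F aF S \<and> (\<forall>n. V n \<subseteq> S n \<and> S n \<subseteq> W n) \<and> U = L S"
      using left_slice_subfunctor[OF F G] left_slice_lift[OF F G] unfolding L_def by blast
  qed
  then show ?thesis by (simp add: L_def)
qed

lemma covers_dsum_right: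
  assumes F: "is_vfunctor p F aF" and G: "is_vfunctor p G aG"
    and cov: "covers p G aG V W" and V: "is_subfunctor p G aG V"
  shows "covers p (\<lambda>n. dsum (F n) (G n)) (dsum_act aF aG)
    (\<lambda>n. nprod_set (carrier (F n)) (V n)) (\<lambda>n. nprod_set (carrier (F n)) (W n))"
proof -
  define R where "R S = (\<lambda>n. nprod_set (carrier (F n)) (S n))" for S
  have "inj R"
  proof (rule injI)
    fix S S' assume "R S = R S'"
    then have "npair \<zero>\<^bsub>F n\<^esub> b \<in> R S n \<longleftrightarrow> npair \<zero>\<^bsub>F n\<^esub> b \<in> R S' n" for n b by simp
    then show "S = S'" by (simp add: R_def fun_eq_iff set_eq_iff vfunctor_zero_closed[OF F])
  qed
  then have "covers p (\<lambda>n. dsum (F n) (G n)) (dsum_act aF aG) (R V) (R W)"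
  proof (rule covers_image[OF cov])
    show "R S n \<subseteq> R S' n" if "\<And>n. S n \<subseteq> S' n" for S S' n using that by (auto simp: R_def nprod_set_def)
    fix U assume "is_subfunctor p (\<lambda>n. dsum (F n) (G n)) (dsum_act aF aG) U" "\<forall>n. R V n \<subseteq> U n \<and> U n \<subseteq> R W n"
    then show "\<exists>S. is_subfunctor p G aG S \<and> (\<forall>n. V n \<subseteq> S n \<and> S n \<subseteq> W n) \<and> U = R S"
      using right_slice_subfunctor[OF F G] right_slice_lift[OF F G] subfunctor_zero[OF G V]
      unfolding R_def by blast
  qed
  then show ?thesis by (simp add: R_def)
qed

text \<open>The series of \<open>F \<oplus> G\<close> runs through \<open>S\<^sub>i \<oplus> 0\<close> and then through \<open>F \<oplus> T\<^sub>j\<close>;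
  the two descriptions agree at \<open>i = k\<close>, where both give \<open>F \<oplus> 0\<close>.\<close>

lemma dsum_composition_series:
  assumes F: "is_vfunctor p F aF" and G: "is_vfunctor p G aG"
    and cs: "is_composition_series p F aF k S" and ct: "is_composition_series p G aG l T"
  shows "is_composition_series p (\<lambda>n. dsum (F n) (G n)) (dsum_act aF aG) (k + l)
     (\<lambda>i n. if i \<le> k then nprod_set (S i n) {\<zero>\<^bsub>G n\<^esub>} else nprod_set (carrier (F n)) (T (i - k) n))"
    (is "is_composition_series p ?D ?a _ ?Q")
proof -
  note S = cs[unfolded is_composition_series_iff_covers]
  note T = ct[unfolded is_composition_series_iff_covers]
  have Q_high: "?Q i = (\<lambda>n. nprod_set (carrier (F n)) (T (i - k) n))" if "k \<le> i" for i
    using that S T by (cases "i = k") simp_all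
  show ?thesis
    unfolding is_composition_series_iff_covers
  proof (intro conjI allI impI)
    fix i assume "i \<le> k + l"
    then show "is_subfunctor p ?D ?a (?Q i)"
      using S T by (cases "i \<le> k") (auto intro!: dsum_subfunctor F G zero_subfunctor carrier_subfunctor)
  next
    fix n show "?Q 0 n = {\<zero>\<^bsub>?D n\<^esub>}" using S by (simp add: nprod_set_singleton)
  next
    fix n
    have "?Q (k + l) = (\<lambda>n. nprod_set (carrier (F n)) (T l n))"
      using Q_high[of "k + l"] by (simp only: le_add1 add_diff_cancel_left')
    then have "?Q (k + l) n = nprod_set (carrier (F n)) (T l n)" by (rule fun_cong)
    then show "?Q (k + l) n = carrier (?D n)" using T by (simp add: nprod_set_def)
  next
    fix i assume i: "i < k + l"
    show "covers p ?D ?a (?Q i) (?Q (Suc i))"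
    proof (cases "i < k")
      case True
      then show ?thesis using covers_dsum_left[OF F G] S by simp
    next
      case False
      then have "?Q i = (\<lambda>n. nprod_set (carrier (F n)) (T (i - k) n))"
        and "?Q (Suc i) = (\<lambda>n. nprod_set (carrier (F n)) (T (Suc i - k) n))"
        by (intro Q_high; simp)+
      then show ?thesis using covers_dsum_right[OF F G] T False i by (simp add: Suc_diff_le)
    qed
  qed
qed

lemma dsum_finite_vfunctor:
  assumes "finite_vfunctor p F aF" and "finite_vfunctor p G aG"
  shows "finite_vfunctor p (\<lambda>n. dsum (F n) (G n)) (dsum_act aF aG)"
  using assms dsum_vfunctor dsum_composition_series unfolding finite_vfunctor_def by blast

subsection \<open>The constant functor \<open>\<bbbF>\<^sub>p\<close>\<close>

definition Fp_nat :: "nat \<Rightarrow> (int, nat) module" where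
  "Fp_nat p = \<lparr>carrier = {x. int x \<in> carrier (Fp p)}, monoid.mult = (\<lambda>x y. x), one = 0, zero = 0,
     add = (\<lambda>x y. nat (int x \<oplus>\<^bsub>Fp p\<^esub> int y)), smult = (\<lambda>a x. nat (a \<otimes>\<^bsub>Fp p\<^esub> int x))\<rparr>"

lemma Fp_nat_simps [simp]:
  "carrier (Fp_nat p) = {x. int x \<in> carrier (Fp p)}" "\<zero>\<^bsub>Fp_nat p\<^esub> = 0"
  "x \<oplus>\<^bsub>Fp_nat p\<^esub> y = nat (int x \<oplus>\<^bsub>Fp p\<^esub> int y)" "a \<odot>\<^bsub>Fp_nat p\<^esub> x = nat (a \<otimes>\<^bsub>Fp p\<^esub> int x)"
  by (simp_all add: Fp_nat_def)

lemma Fp_field: "prime p \<Longrightarrow> field (Fp p)"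
  by (simp add: residues_prime.intro residues_prime.is_field)

lemma int_nat_Fp: "prime p \<Longrightarrow> z \<in> carrier (Fp p) \<Longrightarrow> int (nat z) = z"
  by (simp add: residue_ring_def)

lemma Fp_nat_module:
  assumes p: "prime p" shows "module (Fp p) (Fp_nat p)"
proof -
  interpret R: field "Fp p" by (rule Fp_field[OF p])
  note nn = int_nat_Fp[OF p]
  have z: "(0::int) = \<zero>\<^bsub>Fp p\<^esub>" by (simp add: residue_ring_def)
  show ?thesis
  proof (rule moduleI)
    show "abelian_group (Fp_nat p)"
    proof (rule abelian_groupI)
      fix x assume x: "x \<in> carrier (Fp_nat p)"
      then have c: "\<ominus>\<^bsub>Fp p\<^esub> int x \<in> carrier (Fp p)" by simp
      show "\<exists>y \<in> carrier (Fp_nat p). y \<oplus>\<^bsub>Fp_nat p\<^esub> x = \<zero>\<^bsub>Fp_nat p\<^esub>"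
      proof (intro bexI)
        show "nat (\<ominus>\<^bsub>Fp p\<^esub> int x) \<in> carrier (Fp_nat p)" using c by (simp add: nn[OF c] del: int_nat_eq)
        show "nat (\<ominus>\<^bsub>Fp p\<^esub> int x) \<oplus>\<^bsub>Fp_nat p\<^esub> x = \<zero>\<^bsub>Fp_nat p\<^esub>"
          using x R.l_neg by (simp add: nn[OF c] del: int_nat_eq flip: z)
      qed
    next
      fix x assume "x \<in> carrier (Fp_nat p)"
      then show "\<zero>\<^bsub>Fp_nat p\<^esub> \<oplus>\<^bsub>Fp_nat p\<^esub> x = x" using R.l_zero by (simp flip: z)
    next
      fix x y z assume "x \<in> carrier (Fp_nat p)" "y \<in> carrier (Fp_nat p)" "z \<in> carrier (Fp_nat p)"
      then show "(x \<oplus>\<^bsub>Fp_nat p\<^esub> y) \<oplus>\<^bsub>Fp_nat p\<^esub> z = x \<oplus>\<^bsub>Fp_nat p\<^esub> (y \<oplus>\<^bsub>Fp_nat p\<^esub> z)"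
        by (simp add: nn R.a_assoc del: int_nat_eq)
    qed (use R.zero_closed in \<open>auto simp: nn R.a_comm simp flip: z simp del: int_nat_eq\<close>)
  qed (auto simp: nn R.is_cring R.l_distr R.r_distr R.m_assoc simp del: int_nat_eq)
qed

definition const_act :: "nat \<Rightarrow> nat \<Rightarrow> mat \<Rightarrow> nat \<Rightarrow> nat" where "const_act m n A x = x"

lemma const_vfunctor: "prime p \<Longrightarrow> is_vfunctor p (\<lambda>n. Fp_nat p) const_act"
  unfolding is_vfunctor_def is_linear_def is_presheaf_def const_act_def
  by (simp add: Fp_nat_module del: Fp_nat_simps)

lemma zero_mor: "0 < p \<Longrightarrow> (\<lambda>i j. 0) \<in> mor p m n"
  by (simp add: mor_def)

lemma const_subfunctor_cases:
  assumes p: "prime p" and T: "is_subfunctor p (\<lambda>n. Fp_nat p) const_act T"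
  shows "T = (\<lambda>n. carrier (Fp_nat p)) \<or> T = (\<lambda>n. {0})"
proof (rule disjCI)
  interpret R: field "Fp p" by (rule Fp_field[OF p])
  note V = const_vfunctor[OF p]
  assume "T \<noteq> (\<lambda>n. {0})"
  then obtain n x where x: "x \<in> T n" "x \<noteq> 0"
    using subfunctor_zero[OF V T] by (auto simp: fun_eq_iff)
  have x_all: "x \<in> T m" for m
    using subfunctor_act[OF V T zero_mor[of p m n] x(1)] p prime_gt_0_nat by (simp add: const_act_def)
  have xc: "int x \<in> carrier (Fp p)" using subfunctor_subset[OF V T x(1)] by simp
  then have xu: "int x \<in> Units (Fp p)" using x(2) R.field_Units by (auto simp: residue_ring_def)
  have "y \<in> T m" if y: "y \<in> carrier (Fp_nat p)" for y m
  proof -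
    define a where "a = int y \<otimes>\<^bsub>Fp p\<^esub> inv\<^bsub>Fp p\<^esub> int x"
    have "a \<in> carrier (Fp p)" using y xu by (simp add: a_def)
    moreover have "a \<odot>\<^bsub>Fp_nat p\<^esub> x = y" using y xu xc by (simp add: a_def R.m_assoc)
    ultimately show ?thesis using subfunctor_smult[OF V T _ x_all] by metis
  qed
  then show "T = (\<lambda>n. carrier (Fp_nat p))"
    using subfunctor_subset[OF V T] by blast
qed

lemma const_finite_vfunctor:
  assumes p: "prime p" shows "finite_vfunctor p (\<lambda>n. Fp_nat p) const_act"
proof -
  note V = const_vfunctor[OF p]
  have "(1::nat) \<in> carrier (Fp_nat p)" using prime_gt_1_nat[OF p] by (simp add: residue_ring_def)
  then have "(\<lambda>n. {0}) \<noteq> (\<lambda>n. carrier (Fp_nat p))" by (metis singletonD zero_neq_one)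
  then have "covers p (\<lambda>n. Fp_nat p) const_act (\<lambda>n. {0}) (\<lambda>n. carrier (Fp_nat p))"
    using vfunctor_zero_closed[OF V] const_subfunctor_cases[OF p] unfolding covers_def by auto
  then have "is_composition_series p (\<lambda>n. Fp_nat p) const_act 1
      (\<lambda>i n. if i = 0 then {0} else carrier (Fp_nat p))"
    using zero_subfunctor[OF V] carrier_subfunctor[OF V]
    by (auto simp: is_composition_series_iff_covers le_Suc_eq)
  then show ?thesis using V unfolding finite_vfunctor_def by blast
qed

lemma presheaf_act_closed: "is_presheaf p X a \<Longrightarrow> A \<in> mor p m n \<Longrightarrow> x \<in> X n \<Longrightarrow> a m n A x \<in> X m"
  by (simp add: is_presheaf_def)

lemma presheaf_act_comp:
  "is_presheaf p X a \<Longrightarrow> A \<in> mor p m n \<Longrightarrow> B \<in> mor p n k \<Longrightarrow> x \<in> X k \<Longrightarrow>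
     a m n A (a n k B x) = a m k (comp p n B A) x"
  by (simp add: is_presheaf_def)

lemma subpresheaf_presheaf:
  "is_presheaf p X a \<Longrightarrow> is_subpresheaf p U X a \<Longrightarrow> is_presheaf p U a"
  unfolding is_presheaf_def is_subpresheaf_def by blast

lemma prod_presheaf:
  "is_presheaf p X aX \<Longrightarrow> is_presheaf p Y aY \<Longrightarrow> is_presheaf p (prod_obj X Y) (prod_act aX aY)"
  unfolding is_presheaf_def prod_obj_def prod_act_def by auto

lemma copr_presheaf:
  "is_presheaf p X aX \<Longrightarrow> is_presheaf p Y aY \<Longrightarrow> is_presheaf p (copr_obj X Y) (copr_act aX aY)"
  unfolding is_presheaf_def copr_obj_def copr_act_def by auto

lemma finite_presheafE:
  assumes "finite_presheaf p X aX"
  obtains F :: "nat \<Rightarrow> (int, nat) module" and aF \<eta>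
  where "finite_vfunctor p F aF" "is_mono p X aX (\<lambda>n. carrier (F n)) aF \<eta>"
  using assms unfolding finite_presheaf_def by blast

lemma finite_presheafI:
  fixes F :: "nat \<Rightarrow> (int, nat) module"
  shows "is_presheaf p X aX \<Longrightarrow> finite_vfunctor p F aF \<Longrightarrow> is_mono p X aX (\<lambda>n. carrier (F n)) aF \<eta> \<Longrightarrow>
    finite_presheaf p X aX"
  unfolding finite_presheaf_def by blast

lemma finite_presheaf_presheaf: "finite_presheaf p X aX \<Longrightarrow> is_presheaf p X aX"
  by (simp add: finite_presheaf_def)

lemma is_mono_restrict:
  "is_mono p X a Z b \<eta> \<Longrightarrow> (\<And>n. U n \<subseteq> X n) \<Longrightarrow> is_mono p U a Z b \<eta>"
  unfolding is_mono_def is_nat_trans_def by (meson inj_on_subset subsetD)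

lemma finite_presheaf_subpresheaf:
  assumes X: "finite_presheaf p X a" and U: "is_subpresheaf p U X a"
  shows "finite_presheaf p U a"
proof -
  obtain F :: "nat \<Rightarrow> (int, nat) module" and aF \<eta>
    where "finite_vfunctor p F aF" "is_mono p X a (\<lambda>n. carrier (F n)) aF \<eta>"
    using X by (rule finite_presheafE)
  moreover have "U n \<subseteq> X n" for n using U by (simp add: is_subpresheaf_def)
  ultimately show ?thesis
    using subpresheaf_presheaf[OF finite_presheaf_presheaf[OF X] U]
    by (blast intro: finite_presheafI is_mono_restrict)
qed

lemma prod_mono_dsum:
  assumes "is_mono p X aX (\<lambda>n. carrier (F n)) aF \<eta>" and "is_mono p Y aY (\<lambda>n. carrier (G n)) aG \<theta>"
  shows "is_mono p (prod_obj X Y) (prod_act aX aY) (\<lambda>n. carrier (dsum (F n) (G n))) (dsum_act aF aG)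
     (\<lambda>n (x, y). npair (\<eta> n x) (\<theta> n y))"
  using assms unfolding is_mono_def is_nat_trans_def inj_on_def
  by (auto simp: prod_obj_def prod_act_def dsum_act_def)

lemma finite_presheaf_prod:
  assumes X: "finite_presheaf p X aX" and Y: "finite_presheaf p Y aY"
  shows "finite_presheaf p (prod_obj X Y) (prod_act aX aY)"
proof -
  obtain F :: "nat \<Rightarrow> (int, nat) module" and aF \<eta>
    where "finite_vfunctor p F aF" "is_mono p X aX (\<lambda>n. carrier (F n)) aF \<eta>"
    using X by (rule finite_presheafE)
  moreover obtain G :: "nat \<Rightarrow> (int, nat) module" and aG \<theta>
    where "finite_vfunctor p G aG" "is_mono p Y aY (\<lambda>n. carrier (G n)) aG \<theta>"
    using Y by (rule finite_presheafE)
  ultimately show ?thesis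
    using prod_presheaf[OF finite_presheaf_presheaf[OF X] finite_presheaf_presheaf[OF Y]]
    by (blast intro: finite_presheafI dsum_finite_vfunctor prod_mono_dsum)
qed

lemma copr_mono_dsum:
  assumes p: "prime p" and F: "is_vfunctor p F aF" and G: "is_vfunctor p G aG"
    and \<eta>: "is_mono p X aX (\<lambda>n. carrier (F n)) aF \<eta>" and \<theta>: "is_mono p Y aY (\<lambda>n. carrier (G n)) aG \<theta>"
  shows "is_mono p (copr_obj X Y) (copr_act aX aY)
     (\<lambda>n. carrier (dsum (dsum (F n) (G n)) (Fp_nat p))) (dsum_act (dsum_act aF aG) const_act)
     (\<lambda>n. case_sum (\<lambda>x. npair (npair (\<eta> n x) \<zero>\<^bsub>G n\<^esub>) 0) (\<lambda>y. npair (npair \<zero>\<^bsub>F n\<^esub> (\<theta> n y)) 1))"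
proof -
  have "(1::nat) \<in> carrier (Fp_nat p)" "(0::nat) \<in> carrier (Fp_nat p)"
    using prime_gt_1_nat[OF p] by (simp_all add: residue_ring_def)
  then show ?thesis
    using \<eta> \<theta> vfunctor_zero_closed[OF F] vfunctor_zero_closed[OF G]
      vfunctor_act_zero[OF F] vfunctor_act_zero[OF G]
    unfolding is_mono_def is_nat_trans_def inj_on_def
    by (auto simp: copr_obj_def copr_act_def dsum_act_def const_act_def simp del: Fp_nat_simps)
qed

lemma finite_presheaf_copr:
  assumes p: "prime p" and X: "finite_presheaf p X aX" and Y: "finite_presheaf p Y aY"
  shows "finite_presheaf p (copr_obj X Y) (copr_act aX aY)"
proof -
  obtain F :: "nat \<Rightarrow> (int, nat) module" and aF \<eta>
    where F: "finite_vfunctor p F aF" and \<eta>: "is_mono p X aX (\<lambda>n. carrier (F n)) aF \<eta>"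
    using X by (rule finite_presheafE)
  obtain G :: "nat \<Rightarrow> (int, nat) module" and aG \<theta>
    where G: "finite_vfunctor p G aG" and \<theta>: "is_mono p Y aY (\<lambda>n. carrier (G n)) aG \<theta>"
    using Y by (rule finite_presheafE)
  show ?thesis
  proof (rule finite_presheafI[OF _ _ copr_mono_dsum[OF p _ _ \<eta> \<theta>]])
    show "is_presheaf p (copr_obj X Y) (copr_act aX aY)"
      by (intro copr_presheaf finite_presheaf_presheaf X Y)
    show "finite_vfunctor p (\<lambda>n. dsum (dsum (F n) (G n)) (Fp_nat p)) (dsum_act (dsum_act aF aG) const_act)"
      by (intro dsum_finite_vfunctor const_finite_vfunctor F G p)
    show "is_vfunctor p F aF" "is_vfunctor p G aG"
      using F G by (simp_all add: finite_vfunctor_def)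
  qed
qed

lemma connected_the_elem: "connected X \<Longrightarrow> the_elem (X 0) \<in> X 0"
  unfolding connected_def by (metis card_1_singletonE singletonI the_elem_eq)

lemma basepoint_closed:
  assumes X: "is_presheaf p X a" and "connected X" and "0 < p"
  shows "basepoint X a n \<in> X n"
  unfolding basepoint_def
  by (rule presheaf_act_closed[OF X zero_mor[OF \<open>0 < p\<close>] connected_the_elem[OF \<open>connected X\<close>]])

lemma comp_zero_left: "comp p n (\<lambda>i j. 0) A = (\<lambda>i j. 0)"
  by (simp add: comp_def)

lemma basepoint_natural:
  assumes X: "is_presheaf p X a" and "connected X" and "0 < p" and A: "A \<in> mor p m n"
  shows "a m n A (basepoint X a n) = basepoint X a m"
  unfolding basepoint_def
    presheaf_act_comp[OF X A zero_mor[OF \<open>0 < p\<close>] connected_the_elem[OF \<open>connected X\<close>]] comp_zero_left ..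

lemma wedge_subpresheaf:
  assumes X: "is_presheaf p X aX" and Y: "is_presheaf p Y aY"
    and cX: "connected X" and cY: "connected Y" and p: "0 < p"
  shows "is_subpresheaf p (wedge_obj X aX Y aY) (prod_obj X Y) (prod_act aX aY)"
  unfolding is_subpresheaf_def
proof (intro conjI allI impI)
  fix n show "wedge_obj X aX Y aY n \<subseteq> prod_obj X Y n"
    using basepoint_closed[OF X cX p] basepoint_closed[OF Y cY p]
    by (auto simp: wedge_obj_def prod_obj_def)
next
  fix m n A z assume A: "A \<in> mor p m n" and "z \<in> wedge_obj X aX Y aY n"
  then show "prod_act aX aY m n A z \<in> wedge_obj X aX Y aY m"
    using basepoint_natural[OF X cX p A] basepoint_natural[OF Y cY p A]
      presheaf_act_closed[OF X A] presheaf_act_closed[OF Y A]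
    by (auto simp: wedge_obj_def prod_act_def)
qed

theorem lemma3p4:
  fixes p :: nat
    and X :: "nat \<Rightarrow> 'a set" and aX :: "nat \<Rightarrow> nat \<Rightarrow> mat \<Rightarrow> 'a \<Rightarrow> 'a"
    and Y :: "nat \<Rightarrow> 'b set" and aY :: "nat \<Rightarrow> nat \<Rightarrow> mat \<Rightarrow> 'b \<Rightarrow> 'b"
  assumes "prime p"
    and "finite_presheaf p X aX"
    and "finite_presheaf p Y aY"
  shows "finite_presheaf p (copr_obj X Y) (copr_act aX aY) \<and>
         finite_presheaf p (prod_obj X Y) (prod_act aX aY) \<and>
         (\<forall>U. is_subpresheaf p U X aX \<longrightarrow> finite_presheaf p U aX) \<and>
         (connected X \<and> connected Y \<longrightarrow>
            finite_presheaf p (wedge_obj X aX Y aY) (prod_act aX aY))"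
proof (intro conjI allI impI)
  show "finite_presheaf p (copr_obj X Y) (copr_act aX aY)"
    using assms by (rule finite_presheaf_copr)
  show prod: "finite_presheaf p (prod_obj X Y) (prod_act aX aY)"
    using assms(2,3) by (rule finite_presheaf_prod)
  show "finite_presheaf p U aX" if "is_subpresheaf p U X aX" for U
    using assms(2) that by (rule finite_presheaf_subpresheaf)
  assume "connected X \<and> connected Y"
  then have "is_subpresheaf p (wedge_obj X aX Y aY) (prod_obj X Y) (prod_act aX aY)"
    using prime_gt_0_nat[OF assms(1)]
    by (intro wedge_subpresheaf finite_presheaf_presheaf assms(2,3)) simp_all
  with prod show "finite_presheaf p (wedge_obj X aX Y aY) (prod_act aX aY)"
    by (rule finite_presheaf_subpresheaf)
qed

end
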